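(* Let $\mathcal{L}_{\rm TM}$ be the Thue–Morse language and let ${\rm S}:\mathcal{L}_{\rm TM}\to\mathbb{N}$ be a homomorphism. Put $p={\rm S}(a)$, $q={\rm S}(b)$. Then $${\rm S}(\mathcal{L}_{\rm TM})=\big(R_{p+q,0}\cup R_{p+q,p}\cup R_{p+q,q}\cup R_{p+q,2p}\cup R_{p+q,2q}\big)\setminus\{0\}.$$
   Context: $\mathbb{N}=\{1,2,3,\dots\}$. Let $\theta$ be the Thue–Morse morphism on $\{a,b\}$, $\theta(a)=ab$, $\theta(b)=ba$. The Thue–Morse language $\mathcal{L}_{\rm TM}$ is the set of all nonempty finite words occurring as factors of $\theta^n(a)$ for some $n\ge0$ (equivalently, of the infinite Thue–Morse word $\theta^\infty(a)=abbabaab\cdots$). A homomorphism ${\rm S}:\mathcal{L}_{\rm TM}\to\mathbb{N}$ is a map with ${\rm S}(w_1\cdots w_n)={\rm S}(w_1)+\cdots+{\rm S}(w_n)$, determined by ${\rm S}(a),{\rm S}(b)\in\mathbb{N}$. For integers $r\ge1$, $s\ge0$, $R_{r,s}=\{s,\ r+s,\ 2r+s,\dots\}=\{rn+s: n\ge0\}$. *)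

theory Defs
  imports Main "HOL-Library.Sublist"
begin

datatype letter = La | Lb

fun tm_letter :: "letter \<Rightarrow> letter list" where
  "tm_letter La = [La, Lb]"
| "tm_letter Lb = [Lb, La]"

definition theta :: "letter list \<Rightarrow> letter list" where
  "theta w = concat (map tm_letter w)"

definition TM_lang :: "letter list set" where
  "TM_lang = {w. w \<noteq> [] \<and> (\<exists>n. sublist w ((theta ^^ n) [La]))}"

definition hom_S :: "nat \<Rightarrow> nat \<Rightarrow> letter list \<Rightarrow> nat" where
  "hom_S p q w = sum_list (map (\<lambda>c. case c of La \<Rightarrow> p | Lb \<Rightarrow> q) w)"

definition R :: "nat \<Rightarrow> nat \<Rightarrow> nat set" where
  "R r s = {r * n + s | n. True}"

end

theory Submission
  imports Defs
begin

text \<open>A factor of the Thue--Morse word is a segment \<open>tm i \<dots> tm (j - 1)\<close> of the Thue--Morse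
  sequence, so its weight is \<open>W j - W i\<close> for the prefix weights \<open>W n\<close>. As \<open>tm (2m)\<close> and
  \<open>tm (2m + 1)\<close> are complementary, \<open>W (2m) = m (p + q)\<close> and \<open>W (2m + 1) = m (p + q) + S (tm m)\<close>,
  so the parities of \<open>i\<close> and \<open>j\<close> leave only the five offsets \<open>0, p, q, 2p, 2q\<close> modulo \<open>p + q\<close>.
  Conversely each of these values is attained, because any two letters, equal or not, occur in
  the sequence at every positive distance from each other.\<close>

fun compl_letter :: "letter \<Rightarrow> letter" where
  "compl_letter La = Lb"
| "compl_letter Lb = La"

lemma compl_letter_compl_letter [simp]: "compl_letter (compl_letter c) = c"
  by (cases c) simp_all

lemma neq_iff_eq_compl_letter: "c \<noteq> c' \<longleftrightarrow> c = compl_letter c'"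
  by (cases c; cases c') simp_all

function tm :: "nat \<Rightarrow> letter" where
  "tm n = (if n = 0 then La else if even n then tm (n div 2) else compl_letter (tm (n div 2)))"
  by auto
termination by (relation "measure id") auto

declare tm.simps [simp del]

lemma tm_0 [simp]: "tm 0 = La"
  by (simp add: tm.simps)

lemma tm_double [simp]: "tm (2 * n) = tm n"
  by (cases "n = 0") (simp_all add: tm.simps[of "2 * n"])

lemma tm_Suc_double [simp]: "tm (Suc (2 * n)) = compl_letter (tm n)"
  by (simp add: tm.simps[of "Suc (2 * n)"])

lemma tm_1 [simp]: "tm (Suc 0) = Lb"
  using tm_Suc_double[of 0] by simp

lemma tm_pair_at_distance:
  "d \<noteq> 0 \<or> c = c' \<Longrightarrow> \<exists>i. tm i = c \<and> tm (i + d) = c'"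
proof (induction d arbitrary: c c' rule: less_induct)
  case (less d)
  consider "d = 0" | e where "d = 2 * e" "e \<noteq> 0" | e where "d = Suc (2 * e)"
    by (metis evenE oddE Suc_eq_plus1 mult_0_right)
  then show ?case
  proof cases
    case 1
    with less.prems have "c = c'" by simp
    with 1 show ?thesis
      by (cases c) (auto intro: exI[of _ 0] exI[of _ "Suc 0"])
  next
    case 2
    then obtain i where "tm i = c" "tm (i + e) = c'"
      using less.IH[of e c c'] by auto
    moreover have "2 * i + d = 2 * (i + e)"
      using 2 by simp
    ultimately show ?thesis
      by (metis tm_double)
  next
    case 3
    show ?thesis
    proof (cases "e = 0 \<and> c = c'")
      case True
      have "tm 5 = La \<and> tm (5 + d) = La" "tm 1 = Lb \<and> tm (1 + d) = Lb"
        using True 3 by (simp_all add: tm.simps)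
      with True show ?thesis
        by (cases c) blast+
    next
      case False
      \<comment> \<open>the pair is taken at positions \<open>2i\<close> and \<open>2(i + e) + 1\<close>\<close>
      then obtain i where "tm i = c" "tm (i + e) = compl_letter c'"
        using less.IH[of e c "compl_letter c'"] 3 neq_iff_eq_compl_letter by auto
      moreover have "2 * i + d = Suc (2 * (i + e))"
        using 3 by simp
      ultimately show ?thesis
        by (metis tm_double tm_Suc_double compl_letter_compl_letter)
    qed
  qed
qed

definition tm_factor :: "nat \<Rightarrow> nat \<Rightarrow> letter list" where
  "tm_factor i j = map tm [i..<j]"

lemma tm_factor_empty [simp]: "j \<le> i \<Longrightarrow> tm_factor i j = []"
  by (simp add: tm_factor_def)

lemma length_tm_factor [simp]: "length (tm_factor i j) = j - i"
  by (simp add: tm_factor_def)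

lemma theta_tm_prefix: "theta (tm_factor 0 m) = tm_factor 0 (2 * m)"
proof (induction m)
  case 0
  then show ?case by (simp add: theta_def tm_factor_def)
next
  case (Suc m)
  have "tm_letter (tm m) = [tm (2 * m), tm (Suc (2 * m))]"
    by (cases "tm m") simp_all
  with Suc show ?case by (simp add: theta_def tm_factor_def)
qed

lemma theta_power_La: "(theta ^^ n) [La] = tm_factor 0 (2 ^ n)"
proof (induction n)
  case 0
  then show ?case by (simp add: tm_factor_def)
next
  case (Suc n)
  then show ?case by (simp add: theta_tm_prefix)
qed

lemma sublist_map_upt:
  assumes "i \<le> j" "j \<le> n"
  shows "sublist (map f [i..<j]) (map f [0..<n])"
proof -
  have "[0..<n] = [0..<i] @ [i..<j] @ [j..<n]"
    using assms upt_add_eq_append[of 0 i "n - i"] upt_add_eq_append[of i j "n - j"] by simp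
  then have "map f [0..<n] = map f [0..<i] @ map f [i..<j] @ map f [j..<n]"
    by simp
  then show ?thesis
    by (simp only: sublist_appendI)
qed

lemma sublist_map_uptE:
  assumes "sublist w (map f [0..<n])"
  obtains i where "w = map f [i..<i + length w]"
proof -
  obtain ps ss where decomp: "map f [0..<n] = ps @ w @ ss"
    using assms by (auto simp: sublist_def)
  have "length (map f [0..<n]) = length (ps @ w @ ss)"
    by (simp only: decomp)
  then have "n = length ps + length w + length ss"
    by simp
  moreover have "w = take (length w) (drop (length ps) (map f [0..<n]))"
    using decomp by simp
  ultimately have "w = map f [length ps..<length ps + length w]"
    by (simp add: take_map drop_map)
  then show ?thesis by (rule that)
qed

lemma TM_lang_eq: "TM_lang = {tm_factor i j | i j. i < j}"
proof (intro equalityI subsetI)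
  fix w assume "w \<in> TM_lang"
  then obtain n where "w \<noteq> []" "sublist w (map tm [0..<2 ^ n])"
    by (auto simp: TM_lang_def theta_power_La tm_factor_def)
  moreover obtain i where "w = map tm [i..<i + length w]"
    using sublist_map_uptE[OF \<open>sublist w _\<close>] by blast
  ultimately have "w = tm_factor i (i + length w)" "i < i + length w"
    by (simp_all add: tm_factor_def)
  then show "w \<in> {tm_factor i j | i j. i < j}" by blast
next
  fix w assume "w \<in> {tm_factor i j | i j. i < j}"
  then obtain i j where w: "w = tm_factor i j" and "i < j" by blast
  moreover have "j \<le> 2 ^ j"
    using less_exp[of j] by simp
  ultimately have "sublist w ((theta ^^ j) [La])"
    by (simp add: theta_power_La tm_factor_def sublist_map_upt)
  with \<open>i < j\<close> w show "w \<in> TM_lang"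
    by (auto simp: TM_lang_def tm_factor_def)
qed

lemma hom_S_append [simp]: "hom_S p q (u @ v) = hom_S p q u + hom_S p q v"
  by (simp add: hom_S_def)

lemma hom_S_Nil [simp]: "hom_S p q [] = 0"
  by (simp add: hom_S_def)

lemma hom_S_singleton [simp]: "hom_S p q [La] = p" "hom_S p q [Lb] = q"
  by (simp_all add: hom_S_def)

lemma hom_S_singleton_cases: "hom_S p q [c] \<in> {p, q}"
  by (cases c) simp_all

lemma hom_S_theta: "hom_S p q (theta w) = length w * (p + q)"
proof (induction w)
  case (Cons c w)
  then show ?case by (cases c) (simp_all add: theta_def hom_S_def)
qed (simp add: theta_def)

lemma hom_S_tm_prefix_double: "hom_S p q (tm_factor 0 (2 * m)) = m * (p + q)"
  using hom_S_theta[of p q "tm_factor 0 m"] by (simp add: theta_tm_prefix)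

lemma hom_S_tm_prefix_Suc_double:
  "hom_S p q (tm_factor 0 (Suc (2 * m))) = m * (p + q) + hom_S p q [tm m]"
proof -
  have "tm_factor 0 (Suc (2 * m)) = tm_factor 0 (2 * m) @ [tm m]"
    by (simp add: tm_factor_def)
  then show ?thesis
    by (simp add: hom_S_tm_prefix_double)
qed

lemma hom_S_tm_prefix:
  "hom_S p q (tm_factor 0 n) = n div 2 * (p + q) + (if even n then 0 else hom_S p q [tm (n div 2)])"
  by (cases "even n")
    (auto elim!: evenE oddE simp: hom_S_tm_prefix_double hom_S_tm_prefix_Suc_double)

lemma hom_S_tm_factor:
  "i \<le> j \<Longrightarrow> hom_S p q (tm_factor 0 i) + hom_S p q (tm_factor i j) = hom_S p q (tm_factor 0 j)"
  using upt_add_eq_append[of 0 i "j - i"] by (simp add: tm_factor_def)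

lemma hom_S_pos: "p \<noteq> 0 \<Longrightarrow> q \<noteq> 0 \<Longrightarrow> w \<noteq> [] \<Longrightarrow> hom_S p q w \<noteq> 0"
  by (cases w; cases "hd w") (auto simp: hom_S_def)

lemma mem_residue_classes_iff:
  "x \<in> R (p + q) 0 \<union> R (p + q) p \<union> R (p + q) q \<union> R (p + q) (2 * p) \<union> R (p + q) (2 * q) \<longleftrightarrow>
    (\<exists>k. \<exists>d\<in>{0, p, q, 2 * p, 2 * q}. x = (p + q) * k + d)"
  by (auto simp: R_def)

lemma residue_of_shifted_multiple:
  fixes x u v k p q :: nat
  assumes x: "x + u = k * (p + q) + v"
    and "u \<in> {0, p, q}" "v \<in> {0, p, q}" "u = 0 \<or> k \<noteq> 0"
  shows "\<exists>k'. \<exists>d\<in>{0, p, q, 2 * p, 2 * q}. x = (p + q) * k' + d"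
proof (cases "u = 0")
  case True
  with assms show ?thesis
    by (intro exI[of _ k] bexI[of _ v]) (auto simp: mult.commute)
next
  case False
  with assms(4) obtain k' where "k = Suc k'"
    using not0_implies_Suc by blast
  with x have x': "x = (p + q) * k' + (p + q - u + v)"
    using False assms(2) by (auto simp: algebra_simps)
  have "p + q - u + v \<in> {p, q, 2 * p, 2 * q} \<or> p + q - u + v = p + q"
    using False assms(2,3) by auto
  then show ?thesis
  proof
    assume "p + q - u + v = p + q"
    with x' show ?thesis
      by (intro exI[of _ "Suc k'"] bexI[of _ 0]) auto
  qed (use x' in blast)
qed

lemma hom_S_tm_factor_residue:
  assumes "i < j"
  shows "\<exists>k. \<exists>d\<in>{0, p, q, 2 * p, 2 * q}. hom_S p q (tm_factor i j) = (p + q) * k + d"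
proof -
  define u where "u = (if even i then 0 else hom_S p q [tm (i div 2)])"
  define v where "v = (if even j then 0 else hom_S p q [tm (j div 2)])"
  obtain k where k: "j div 2 = i div 2 + k"
    using assms le_Suc_ex[of "i div 2" "j div 2"] div_le_mono[of i j 2] by auto
  have "hom_S p q (tm_factor i j) + u + i div 2 * (p + q) = j div 2 * (p + q) + v"
    using hom_S_tm_factor[of i j p q] hom_S_tm_prefix[of p q i] hom_S_tm_prefix[of p q j] assms
    by (simp add: u_def v_def)
  then have "hom_S p q (tm_factor i j) + u = k * (p + q) + v"
    by (simp add: k algebra_simps)
  moreover have "u \<in> {0, p, q}" "v \<in> {0, p, q}"
    using hom_S_singleton_cases by (auto simp: u_def v_def)
  moreover have "u = 0 \<or> k \<noteq> 0"
    using assms k by (auto simp: u_def elim!: oddE)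
  ultimately show ?thesis
    by (rule residue_of_shifted_multiple)
qed

lemma mem_hom_S_image_if_prefix_difference:
  assumes "i < j" "hom_S p q (tm_factor 0 i) + x = hom_S p q (tm_factor 0 j)"
  shows "x \<in> hom_S p q ` TM_lang"
proof -
  have "hom_S p q (tm_factor i j) = x"
    using hom_S_tm_factor[of i j p q] assms by simp
  moreover have "tm_factor i j \<in> TM_lang"
    using assms(1) by (auto simp: TM_lang_eq)
  ultimately show ?thesis by blast
qed

lemma residue_mem_hom_S_image:
  assumes x: "x = (p + q) * k + d" and "d \<in> {0, p, q, 2 * p, 2 * q}" and "x \<noteq> 0"
  shows "x \<in> hom_S p q ` TM_lang"
proof -
  consider "d = 0" | "d = p" | "d = q" | "d = 2 * p" | "d = 2 * q"
    using assms(2) by auto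
  then show ?thesis
  proof cases
    case 1
    with assms have "0 < 2 * k" by auto
    then show ?thesis
      by (rule mem_hom_S_image_if_prefix_difference)
        (use hom_S_tm_prefix_double[of p q k] in \<open>simp add: x 1 mult.commute\<close>)
  next
    case 2
    obtain a where "tm (a + k) = La"
      using tm_pair_at_distance[of k La La] by auto
    then show ?thesis
      by (intro mem_hom_S_image_if_prefix_difference[of "2 * a" "Suc (2 * (a + k))"])
        (simp_all only: hom_S_tm_prefix_double hom_S_tm_prefix_Suc_double hom_S_singleton,
          simp_all add: x 2 algebra_simps)
  next
    case 3
    obtain a where "tm (a + k) = Lb"
      using tm_pair_at_distance[of k Lb Lb] by auto
    then show ?thesis
      by (intro mem_hom_S_image_if_prefix_difference[of "2 * a" "Suc (2 * (a + k))"])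
        (simp_all only: hom_S_tm_prefix_double hom_S_tm_prefix_Suc_double hom_S_singleton,
          simp_all add: x 3 algebra_simps)
  next
    case 4
    obtain a where "tm a = Lb" "tm (a + Suc k) = La"
      using tm_pair_at_distance[of "Suc k" Lb La] by auto
    then show ?thesis
      by (intro mem_hom_S_image_if_prefix_difference[of "Suc (2 * a)" "Suc (2 * (a + Suc k))"])
        (simp_all only: hom_S_tm_prefix_double hom_S_tm_prefix_Suc_double hom_S_singleton,
          simp_all add: x 4 algebra_simps)
  next
    case 5
    obtain a where "tm a = La" "tm (a + Suc k) = Lb"
      using tm_pair_at_distance[of "Suc k" La Lb] by auto
    then show ?thesis
      by (intro mem_hom_S_image_if_prefix_difference[of "Suc (2 * a)" "Suc (2 * (a + Suc k))"])
        (simp_all only: hom_S_tm_prefix_double hom_S_tm_prefix_Suc_double hom_S_singleton,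
          simp_all add: x 5 algebra_simps)
  qed
qed

theorem theorem7:
  fixes p q :: nat
  assumes "p \<ge> 1" and "q \<ge> 1"
  shows "hom_S p q ` TM_lang =
    (R (p + q) 0 \<union> R (p + q) p \<union> R (p + q) q \<union> R (p + q) (2 * p) \<union> R (p + q) (2 * q)) - {0}"
proof (intro equalityI subsetI)
  fix x assume "x \<in> hom_S p q ` TM_lang"
  then obtain i j where ij: "i < j" and x: "x = hom_S p q (tm_factor i j)"
    by (auto simp: TM_lang_eq)
  have "x \<noteq> 0"
    using hom_S_pos[of p q "tm_factor i j"] assms ij x by (simp add: tm_factor_def)
  moreover have "\<exists>k. \<exists>d\<in>{0, p, q, 2 * p, 2 * q}. x = (p + q) * k + d"
    using hom_S_tm_factor_residue[OF ij] x by simp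
  ultimately show "x \<in> (R (p + q) 0 \<union> R (p + q) p \<union> R (p + q) q \<union> R (p + q) (2 * p) \<union> R (p + q) (2 * q)) - {0}"
    unfolding Diff_iff singleton_iff mem_residue_classes_iff by blast
next
  fix x assume "x \<in> (R (p + q) 0 \<union> R (p + q) p \<union> R (p + q) q \<union> R (p + q) (2 * p) \<union> R (p + q) (2 * q)) - {0}"
  then obtain k d where "x = (p + q) * k + d" "d \<in> {0, p, q, 2 * p, 2 * q}" "x \<noteq> 0"
    unfolding Diff_iff singleton_iff mem_residue_classes_iff by blast
  then show "x \<in> hom_S p q ` TM_lang"
    by (rule residue_mem_hom_S_image)
qed

end
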